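(* Let $C$ be an Additive-CSP($\psi$) constraint on variables $x_1,\dots,x_k$, let $G$ be its label-extended graph and $G^0$ the label-extended graph of the homogeneous constraint $C^0$. Then: (Completeness) for each assignment $\alpha:\{x_1,\dots,x_k\}\to H$ satisfying $C$ there is an $\alpha$-permutation $f$ which is a homomorphism from $G$ to $G^0$; (Soundness) if $f$ is an $\alpha$-permutation which is a homomorphism from $G$ to $G^0$, then $\alpha$ satisfies $C$.
   Context: $H$ is a finite abelian group, $k\ge3$, and $\psi\subseteq H^k$ is a balanced pairwise independent subgroup: a proper subgroup of $H^k$ such that for $a$ uniform in $\psi$ each coordinate is uniform on $H$ and any two coordinates are independent. An Additive-CSP($\psi$) constraint $C$ on distinct variables $x_1,\dots,x_k$ (taking values in $H$) has the form $\psi(x_1+a_1,\dots,x_k+a_k)=1$ with $a_i\in H$; its homogeneous version $C^0$ is $\psi(x_1,\dots,x_k)=1$. The label-extended graph of $C$ has variable vertices $x_i\mapsto b$ for $i\in[k]$, $b\in H$, and one constraint vertex for each assignment $\beta:\{x_1,\dots,x_k\}\to H$ satisfying $C$; its only edges join each constraint vertex $\beta$ to the $k$ variable vertices $x_i\mapsto\beta(x_i)$. The label-extended graphs of $C$ and $C^0$ share the names of variable vertices. For an assignment $\alpha$, a bijection $f$ from the vertices of $G$ to the vertices of $G^0$ is an $\alpha$-permutation if $f(x_i\mapsto b)=x_i\mapsto(b-\alpha(x_i))$ for every $i\in[k]$ and $b\in H$. $f$ is a homomorphism from $G$ to $G^0$ if it maps every edge of $G$ to an edge of $G^0$. *)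

theory Defs
  imports Main
begin

text \<open>H is a finite abelian group ('h), the k coordinates / variables are indexed
 by a finite type 'k (so k = CARD('k)); an element of H^k is a function 'k \<Rightarrow> 'h.\<close>

definition balanced_pairwise_independent :: "('k::finite \<Rightarrow> 'h::{finite,ab_group_add}) set \<Rightarrow> bool" where
  "balanced_pairwise_independent \<psi> \<longleftrightarrow>
     (\<lambda>_. 0) \<in> \<psi> \<and> (\<forall>a\<in>\<psi>. \<forall>b\<in>\<psi>. (\<lambda>i. a i + b i) \<in> \<psi>) \<and> (\<forall>a\<in>\<psi>. (\<lambda>i. - a i) \<in> \<psi>) \<and> \<psi> \<noteq> UNIV \<and>
     (\<forall>i b. card {a\<in>\<psi>. a i = b} * card (UNIV :: 'h set) = card \<psi>) \<and>
     (\<forall>i j. i \<noteq> j \<longrightarrow> (\<forall>b c. card {a\<in>\<psi>. a i = b \<and> a j = c} * card (UNIV :: 'h set)^2 = card \<psi>))"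

text \<open>The constraint C is psi(x_1 + a_1, ..., x_k + a_k) = 1, given by the shift vector a.
 An assignment beta satisfies C iff (beta_i + a_i)_i \<in> psi. The homogeneous version C^0 has a = 0.\<close>
definition csp_sat :: "('k \<Rightarrow> 'h::ab_group_add) set \<Rightarrow> ('k \<Rightarrow> 'h) \<Rightarrow> ('k \<Rightarrow> 'h) \<Rightarrow> bool" where
  "csp_sat \<psi> a \<beta> \<longleftrightarrow> (\<lambda>i. \<beta> i + a i) \<in> \<psi>"

datatype ('k, 'h) lvert = VarV 'k 'h | ConV "'k \<Rightarrow> 'h"

definition lverts :: "('k \<Rightarrow> 'h::ab_group_add) set \<Rightarrow> ('k \<Rightarrow> 'h) \<Rightarrow> ('k, 'h) lvert set" where
  "lverts \<psi> a = {VarV i b | i b. True} \<union> ConV ` {\<beta>. csp_sat \<psi> a \<beta>}"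

definition ledges :: "('k \<Rightarrow> 'h::ab_group_add) set \<Rightarrow> ('k \<Rightarrow> 'h) \<Rightarrow> ('k, 'h) lvert set set" where
  "ledges \<psi> a = {{ConV \<beta>, VarV i (\<beta> i)} | \<beta> i. csp_sat \<psi> a \<beta>}"

definition alpha_perm ::
  "('k \<Rightarrow> 'h::ab_group_add) set \<Rightarrow> ('k \<Rightarrow> 'h) \<Rightarrow> ('k \<Rightarrow> 'h) \<Rightarrow> (('k,'h) lvert \<Rightarrow> ('k,'h) lvert) \<Rightarrow> bool" where
  "alpha_perm \<psi> a \<alpha> f \<longleftrightarrow> bij_betw f (lverts \<psi> a) (lverts \<psi> (\<lambda>_. 0)) \<and>
     (\<forall>i b. f (VarV i b) = VarV i (b - \<alpha> i))"

definition is_graph_hom :: "'v set set \<Rightarrow> 'w set set \<Rightarrow> ('v \<Rightarrow> 'w) \<Rightarrow> bool" where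
  "is_graph_hom E E0 f \<longleftrightarrow> (\<forall>e\<in>E. f ` e \<in> E0)"

end

theory Submission
  imports Defs
begin

text \<open>Only the subgroup structure of \<psi> matters: translating all labels by -\<alpha> maps the
  satisfying assignments of C bijectively onto those of the homogeneous constraint whenever
  \<alpha> satisfies C, which gives completeness. Conversely, an \<alpha>-permutation that is a homomorphism must send the
  constraint vertex of any satisfying \<beta> to the constraint vertex of \<beta> - \<alpha>, because that
  vertex is adjacent to every variable vertex x_i \<mapsto> \<beta>_i - \<alpha>_i; taking \<beta> = -a, which
  satisfies C since 0 \<in> \<psi>, yields -a - \<alpha> \<in> \<psi> and hence \<alpha> + a \<in> \<psi>.\<close>

lemma balanced_pairwise_independent_zero:
  "balanced_pairwise_independent \<psi> \<Longrightarrow> (\<lambda>_. 0) \<in> \<psi>"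
  unfolding balanced_pairwise_independent_def by (elim conjE)

lemma balanced_pairwise_independent_diff:
  assumes "balanced_pairwise_independent \<psi>" and "x \<in> \<psi>" and "y \<in> \<psi>"
  shows "(\<lambda>i. x i - y i) \<in> \<psi>"
proof -
  have add: "\<forall>u\<in>\<psi>. \<forall>v\<in>\<psi>. (\<lambda>i. u i + v i) \<in> \<psi>"
    using assms(1) unfolding balanced_pairwise_independent_def by (elim conjE)
  have neg: "\<forall>u\<in>\<psi>. (\<lambda>i. - u i) \<in> \<psi>"
    using assms(1) unfolding balanced_pairwise_independent_def by (elim conjE)
  have "(\<lambda>i. - y i) \<in> \<psi>" using neg assms(3) by blast
  from add[rule_format, OF assms(2) this] show ?thesis by simp
qed

lemma csp_sat_translate:
  assumes diff: "\<And>x y. x \<in> \<psi> \<Longrightarrow> y \<in> \<psi> \<Longrightarrow> (\<lambda>i. x i - y i) \<in> \<psi>"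
    and sat: "csp_sat \<psi> a \<alpha>"
  shows "csp_sat \<psi> a \<beta> \<longleftrightarrow> csp_sat \<psi> (\<lambda>_. 0) (\<lambda>i. \<beta> i - \<alpha> i)"
proof
  assume "csp_sat \<psi> a \<beta>"
  then have "(\<lambda>i. (\<beta> i + a i) - (\<alpha> i + a i)) \<in> \<psi>"
    using diff sat unfolding csp_sat_def by blast
  then show "csp_sat \<psi> (\<lambda>_. 0) (\<lambda>i. \<beta> i - \<alpha> i)"
    unfolding csp_sat_def by simp
next
  let ?\<alpha>a = "\<lambda>i. \<alpha> i + a i"
  assume "csp_sat \<psi> (\<lambda>_. 0) (\<lambda>i. \<beta> i - \<alpha> i)"
  then have \<gamma>: "(\<lambda>i. \<beta> i - \<alpha> i) \<in> \<psi>" unfolding csp_sat_def by simp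
  have \<alpha>a: "?\<alpha>a \<in> \<psi>" using sat unfolding csp_sat_def .
  have "(\<lambda>i. ?\<alpha>a i - ?\<alpha>a i) \<in> \<psi>" using diff \<alpha>a by blast
  then have "(\<lambda>i. 0 - (\<beta> i - \<alpha> i)) \<in> \<psi>" using diff \<gamma> by fastforce
  then have "(\<lambda>i. ?\<alpha>a i - (0 - (\<beta> i - \<alpha> i))) \<in> \<psi>" using diff \<alpha>a by blast
  then show "csp_sat \<psi> a \<beta>" unfolding csp_sat_def by (simp add: algebra_simps)
qed

definition shift_lvert :: "('k \<Rightarrow> 'h::ab_group_add) \<Rightarrow> ('k, 'h) lvert \<Rightarrow> ('k, 'h) lvert" where
  "shift_lvert c v = (case v of VarV i b \<Rightarrow> VarV i (b + c i) | ConV \<beta> \<Rightarrow> ConV (\<lambda>i. \<beta> i + c i))"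

lemma shift_lvert_simps [simp]:
  "shift_lvert c (VarV i b) = VarV i (b + c i)"
  "shift_lvert c (ConV \<beta>) = ConV (\<lambda>i. \<beta> i + c i)"
  by (simp_all add: shift_lvert_def)

lemma shift_lvert_shift_lvert [simp]:
  "shift_lvert c (shift_lvert d v) = shift_lvert (\<lambda>i. d i + c i) v"
  by (cases v) (simp_all add: add.assoc)

lemma shift_lvert_0 [simp]: "shift_lvert (\<lambda>_. 0) v = v"
  by (cases v) simp_all

lemma lverts_iff:
  "VarV i b \<in> lverts \<psi> a"
  "ConV \<beta> \<in> lverts \<psi> a \<longleftrightarrow> csp_sat \<psi> a \<beta>"
  by (auto simp: lverts_def)

lemma shift_lvert_maps_lverts:
  assumes "\<And>\<beta>. csp_sat \<psi> a \<beta> \<Longrightarrow> csp_sat \<psi> a' (\<lambda>i. \<beta> i + c i)"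
  shows "shift_lvert c ` lverts \<psi> a \<subseteq> lverts \<psi> a'"
proof
  fix w assume "w \<in> shift_lvert c ` lverts \<psi> a"
  then obtain v where "v \<in> lverts \<psi> a" and w: "w = shift_lvert c v" by blast
  then show "w \<in> lverts \<psi> a'"
    using assms by (cases v) (simp_all add: lverts_iff)
qed

lemma bij_betw_shift_lvert:
  assumes diff: "\<And>x y. x \<in> \<psi> \<Longrightarrow> y \<in> \<psi> \<Longrightarrow> (\<lambda>i. x i - y i) \<in> \<psi>"
    and sat: "csp_sat \<psi> a \<alpha>"
  shows "bij_betw (shift_lvert (\<lambda>i. - \<alpha> i)) (lverts \<psi> a) (lverts \<psi> (\<lambda>_. 0))"
proof (rule bij_betw_byWitness[where f' = "shift_lvert \<alpha>"])
  note translate = csp_sat_translate[OF diff sat]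
  show "shift_lvert (\<lambda>i. - \<alpha> i) ` lverts \<psi> a \<subseteq> lverts \<psi> (\<lambda>_. 0)"
    by (rule shift_lvert_maps_lverts) (simp add: translate)
  show "shift_lvert \<alpha> ` lverts \<psi> (\<lambda>_. 0) \<subseteq> lverts \<psi> a"
    by (rule shift_lvert_maps_lverts) (simp add: translate)
  show "\<forall>v\<in>lverts \<psi> a. shift_lvert \<alpha> (shift_lvert (\<lambda>i. - \<alpha> i) v) = v"
    "\<forall>v\<in>lverts \<psi> (\<lambda>_. 0). shift_lvert (\<lambda>i. - \<alpha> i) (shift_lvert \<alpha> v) = v"
    by simp_all
qed

lemma graph_hom_shift_lvert:
  assumes "\<And>\<beta>. csp_sat \<psi> a \<beta> \<Longrightarrow> csp_sat \<psi> a' (\<lambda>i. \<beta> i + c i)"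
  shows "is_graph_hom (ledges \<psi> a) (ledges \<psi> a') (shift_lvert c)"
  unfolding is_graph_hom_def
proof
  fix e assume "e \<in> ledges \<psi> a"
  then obtain \<beta> i where e: "e = {ConV \<beta>, VarV i (\<beta> i)}" and "csp_sat \<psi> a \<beta>"
    unfolding ledges_def by blast
  then have "shift_lvert c ` e = {ConV (\<lambda>i. \<beta> i + c i), VarV i ((\<lambda>i. \<beta> i + c i) i)}"
    and "csp_sat \<psi> a' (\<lambda>i. \<beta> i + c i)"
    using assms by simp_all
  then show "shift_lvert c ` e \<in> ledges \<psi> a'" unfolding ledges_def by blast
qed

lemma graph_hom_maps_ConV:
  assumes hom: "is_graph_hom (ledges \<psi> a) (ledges \<psi> a') f"
    and var: "\<And>i b. f (VarV i b) = VarV i (b - \<alpha> i)"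
    and sat: "csp_sat \<psi> a \<beta>"
  shows "f (ConV \<beta>) = ConV (\<lambda>i. \<beta> i - \<alpha> i)" and "csp_sat \<psi> a' (\<lambda>i. \<beta> i - \<alpha> i)"
proof -
  have adjacent: "\<exists>\<gamma>. f (ConV \<beta>) = ConV \<gamma> \<and> \<gamma> i = \<beta> i - \<alpha> i \<and> csp_sat \<psi> a' \<gamma>" for i
  proof -
    have "{ConV \<beta>, VarV i (\<beta> i)} \<in> ledges \<psi> a" using sat unfolding ledges_def by blast
    then have "{f (ConV \<beta>), VarV i (\<beta> i - \<alpha> i)} \<in> ledges \<psi> a'"
      using hom var unfolding is_graph_hom_def by fastforce
    then obtain \<gamma> j where "{f (ConV \<beta>), VarV i (\<beta> i - \<alpha> i)} = {ConV \<gamma>, VarV j (\<gamma> j)}"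
      and "csp_sat \<psi> a' \<gamma>"
      unfolding ledges_def by blast
    then show ?thesis by (auto simp: doubleton_eq_iff)
  qed
  then obtain \<gamma> where \<gamma>: "f (ConV \<beta>) = ConV \<gamma>" "csp_sat \<psi> a' \<gamma>" by blast
  have "\<gamma> = (\<lambda>i. \<beta> i - \<alpha> i)"
  proof
    fix i show "\<gamma> i = \<beta> i - \<alpha> i" using adjacent[of i] \<gamma>(1) by auto
  qed
  with \<gamma> show "f (ConV \<beta>) = ConV (\<lambda>i. \<beta> i - \<alpha> i)" and "csp_sat \<psi> a' (\<lambda>i. \<beta> i - \<alpha> i)"
    by simp_all
qed

lemma csp_sat_of_graph_hom:
  assumes zero: "(\<lambda>_. 0) \<in> \<psi>"
    and diff: "\<And>x y. x \<in> \<psi> \<Longrightarrow> y \<in> \<psi> \<Longrightarrow> (\<lambda>i. x i - y i) \<in> \<psi>"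
    and hom: "is_graph_hom (ledges \<psi> a) (ledges \<psi> (\<lambda>_. 0)) f"
    and var: "\<And>i b. f (VarV i b) = VarV i (b - \<alpha> i)"
  shows "csp_sat \<psi> a \<alpha>"
proof -
  have "csp_sat \<psi> a (\<lambda>i. - a i)" using zero unfolding csp_sat_def by simp
  then have "csp_sat \<psi> (\<lambda>_. 0) (\<lambda>i. - a i - \<alpha> i)"
    by (rule graph_hom_maps_ConV(2)[OF hom var])
  then have "(\<lambda>i. - a i - \<alpha> i) \<in> \<psi>" unfolding csp_sat_def by simp
  note diff[OF zero this]
  moreover have "(\<lambda>i. 0 - (- a i - \<alpha> i)) = (\<lambda>i. \<alpha> i + a i)" by (simp add: algebra_simps)
  ultimately show ?thesis unfolding csp_sat_def by simp
qed

lemma alpha_perm_graph_hom_exists: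
  assumes diff: "\<And>x y. x \<in> \<psi> \<Longrightarrow> y \<in> \<psi> \<Longrightarrow> (\<lambda>i. x i - y i) \<in> \<psi>"
    and sat: "csp_sat \<psi> a \<alpha>"
  shows "\<exists>f. alpha_perm \<psi> a \<alpha> f \<and> is_graph_hom (ledges \<psi> a) (ledges \<psi> (\<lambda>_. 0)) f"
proof (intro exI conjI)
  let ?f = "shift_lvert (\<lambda>i. - \<alpha> i)"
  have "\<forall>i b. ?f (VarV i b) = VarV i (b - \<alpha> i)" by simp
  with bij_betw_shift_lvert[OF diff sat] show "alpha_perm \<psi> a \<alpha> ?f"
    unfolding alpha_perm_def by (intro conjI)
  show "is_graph_hom (ledges \<psi> a) (ledges \<psi> (\<lambda>_. 0)) ?f"
    by (rule graph_hom_shift_lvert) (simp add: csp_sat_translate[OF diff sat])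
qed

theorem lemma7p2:
  fixes \<psi> :: "('k::finite \<Rightarrow> 'h::{finite,ab_group_add}) set" and a :: "'k \<Rightarrow> 'h"
  assumes "card (UNIV :: 'k set) \<ge> 3" and "balanced_pairwise_independent \<psi>"
  shows "(\<forall>\<alpha>. csp_sat \<psi> a \<alpha> \<longrightarrow>
            (\<exists>f. alpha_perm \<psi> a \<alpha> f \<and> is_graph_hom (ledges \<psi> a) (ledges \<psi> (\<lambda>_. 0)) f))
       \<and> (\<forall>\<alpha> f. alpha_perm \<psi> a \<alpha> f \<and> is_graph_hom (ledges \<psi> a) (ledges \<psi> (\<lambda>_. 0)) f
            \<longrightarrow> csp_sat \<psi> a \<alpha>)"
proof (intro conjI allI impI)
  note zero = balanced_pairwise_independent_zero[OF assms(2)]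
    and diff = balanced_pairwise_independent_diff[OF assms(2)]
  show "\<exists>f. alpha_perm \<psi> a \<alpha> f \<and> is_graph_hom (ledges \<psi> a) (ledges \<psi> (\<lambda>_. 0)) f"
    if "csp_sat \<psi> a \<alpha>" for \<alpha>
    using diff that by (rule alpha_perm_graph_hom_exists)
  show "csp_sat \<psi> a \<alpha>"
    if "alpha_perm \<psi> a \<alpha> f \<and> is_graph_hom (ledges \<psi> a) (ledges \<psi> (\<lambda>_. 0)) f" for \<alpha> f
    using zero diff that unfolding alpha_perm_def by (blast intro: csp_sat_of_graph_hom)
qed

end
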